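(* Let $f_1:X_1\to Y_1$ and $f_2:X_2\to Y_2$ be safe maps in $\mathsf{Nom}$. Then $(u_1,u_2)\in X_1\times X_2$ is $(f_1\times f_2)$-safe if and only if $u_i$ is $f_i$-safe for $i=1,2$, $\mathsf{bv}_{f_1}(u_1)\#u_2$, and $\mathsf{bv}_{f_2}(u_2)\#u_1$.
   Context: Nominal sets over a countably infinite set $\mathcal V$ of names; $\mathsf{supp}(u)$ the least finite support; for a finite set $S$ of names, $S\#u$ means $S\cap\mathsf{supp}(u)=\emptyset$; products carry the coordinatewise action. For an equivariant $f:X\to Y$: $u\in X$ is $f$-safe if $|\mathsf{supp}(u)|=\max\{|\mathsf{supp}(v)|:v\in f^{-1}(f(u))\}$ (the maximum existing); $\mathsf{bv}_f(u)=\mathsf{supp}(u)\setminus\mathsf{supp}(f(u))$; $f$ is safe if every element of $Y$ has an $f$-safe preimage. *)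

theory Defs
  imports "HOL-Combinatorics.Perm"
begin

(* Names: the countably infinite set V is represented by nat.
   Finitary permutations of names: the type nat perm (bijections moving finitely many points). *)

type_synonym name = nat

definition perm_action :: "'a set \<Rightarrow> (name perm \<Rightarrow> 'a \<Rightarrow> 'a) \<Rightarrow> bool" where
  "perm_action X act \<longleftrightarrow>
     (\<forall>p x. x \<in> X \<longrightarrow> act p x \<in> X) \<and>
     (\<forall>x\<in>X. act 1 x = x) \<and>
     (\<forall>p q x. x \<in> X \<longrightarrow> act (p * q) x = act p (act q x))"

definition supports :: "(name perm \<Rightarrow> 'a \<Rightarrow> 'a) \<Rightarrow> name set \<Rightarrow> 'a \<Rightarrow> bool" where
  "supports act S x \<longleftrightarrow> (\<forall>p. (\<forall>a\<in>S. Perm.apply p a = a) \<longrightarrow> act p x = x)"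

definition nominal_set :: "'a set \<Rightarrow> (name perm \<Rightarrow> 'a \<Rightarrow> 'a) \<Rightarrow> bool" where
  "nominal_set X act \<longleftrightarrow> perm_action X act \<and> (\<forall>x\<in>X. \<exists>S. finite S \<and> supports act S x)"

(* support = intersection of all finite supports (= least finite support in a nominal set) *)
definition supp :: "(name perm \<Rightarrow> 'a \<Rightarrow> 'a) \<Rightarrow> 'a \<Rightarrow> name set" where
  "supp act x = \<Inter> {S. finite S \<and> supports act S x}"

definition fresh_set :: "name set \<Rightarrow> (name perm \<Rightarrow> 'a \<Rightarrow> 'a) \<Rightarrow> 'a \<Rightarrow> bool" where
  "fresh_set S act u \<longleftrightarrow> S \<inter> supp act u = {}"

definition prod_act :: "(name perm \<Rightarrow> 'a \<Rightarrow> 'a) \<Rightarrow> (name perm \<Rightarrow> 'b \<Rightarrow> 'b) \<Rightarrow> name perm \<Rightarrow> 'a \<times> 'b \<Rightarrow> 'a \<times> 'b" where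
  "prod_act act1 act2 p z = (act1 p (fst z), act2 p (snd z))"

definition equivariant :: "'a set \<Rightarrow> (name perm \<Rightarrow> 'a \<Rightarrow> 'a) \<Rightarrow> 'b set \<Rightarrow> (name perm \<Rightarrow> 'b \<Rightarrow> 'b) \<Rightarrow> ('a \<Rightarrow> 'b) \<Rightarrow> bool" where
  "equivariant X actX Y actY f \<longleftrightarrow>
     (\<forall>x\<in>X. f x \<in> Y) \<and> (\<forall>p x. x \<in> X \<longrightarrow> f (actX p x) = actY p (f x))"

definition f_safe :: "'a set \<Rightarrow> (name perm \<Rightarrow> 'a \<Rightarrow> 'a) \<Rightarrow> ('a \<Rightarrow> 'b) \<Rightarrow> 'a \<Rightarrow> bool" where
  "f_safe X actX f u \<longleftrightarrow> u \<in> X \<and>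
     (\<forall>v\<in>X. f v = f u \<longrightarrow> card (supp actX v) \<le> card (supp actX u))"

definition bv :: "(name perm \<Rightarrow> 'a \<Rightarrow> 'a) \<Rightarrow> (name perm \<Rightarrow> 'b \<Rightarrow> 'b) \<Rightarrow> ('a \<Rightarrow> 'b) \<Rightarrow> 'a \<Rightarrow> name set" where
  "bv actX actY f u = supp actX u - supp actY (f u)"

definition safe_map :: "'a set \<Rightarrow> (name perm \<Rightarrow> 'a \<Rightarrow> 'a) \<Rightarrow> 'b set \<Rightarrow> ('a \<Rightarrow> 'b) \<Rightarrow> bool" where
  "safe_map X actX Y f \<longleftrightarrow> (\<forall>y\<in>Y. \<exists>u. f u = y \<and> f_safe X actX f u)"

end

theory Submission
  imports Defs
begin

text \<open>
  For an equivariant \<open>f\<close>, an element \<open>v\<close> of the fibre over \<open>y\<close> has support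
  \<open>supp y \<union> bv v\<close> with the two parts disjoint, so \<open>|supp v| = |supp y| + |bv v|\<close>. The support of a pair
  \<open>(v\<^sub>1, v\<^sub>2)\<close> in a fibre of \<open>f\<^sub>1 \<times> f\<^sub>2\<close> is
  \<open>supp y\<^sub>1 \<union> supp y\<^sub>2 \<union> bv v\<^sub>1 \<union> bv v\<^sub>2\<close>, of size at most
  \<open>|supp y\<^sub>1 \<union> supp y\<^sub>2| + |bv v\<^sub>1| + |bv v\<^sub>2|\<close>, with equality exactly when
  \<open>bv v\<^sub>1 # v\<^sub>2\<close> and \<open>bv v\<^sub>2 # v\<^sub>1\<close>. Renaming the bound names of \<open>v\<^sub>1\<close> and \<open>v\<^sub>2\<close> apart by
  permutations fixing \<open>supp y\<^sub>i\<close> stays inside the fibres and attains this bound, so the maximal support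
  size in the fibre is the bound maximised over both fibres separately. Hence \<open>(u\<^sub>1, u\<^sub>2)\<close> is safe
  iff it attains the bound and each \<open>u\<^sub>i\<close> maximises \<open>|bv u\<^sub>i|\<close> in its own fibre.
\<close>

lemma swap_fixes_outside_Int_supports:
  assumes pa: "perm_action X act" and x: "x \<in> X" and fin: "finite S" "finite T"
    and sS: "supports act S x" and sT: "supports act T x"
    and a: "a \<notin> S \<inter> T" and b: "b \<notin> S \<inter> T"
  shows "act (Perm.swap a b) x = x"
proof -
  have swap_fresh: "act (Perm.swap u c) x = x" if u: "u \<notin> S \<inter> T" and c: "c \<notin> S \<union> T" for u c
  proof (cases "u \<in> S")
    case False
    then have "\<forall>z\<in>S. Perm.apply (Perm.swap u c) z = z" using c by (intro ballI apply_swap_same) auto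
    then show ?thesis using sS unfolding supports_def by blast
  next
    case True
    then have "\<forall>z\<in>T. Perm.apply (Perm.swap u c) z = z" using u c by (intro ballI apply_swap_same) auto
    then show ?thesis using sT unfolding supports_def by blast
  qed
  obtain c where c: "c \<notin> S \<union> T \<union> {a, b}"
    using ex_new_if_finite[OF infinite_UNIV_nat, of "S \<union> T \<union> {a, b}"] fin by auto
  have act_mult: "\<And>p q. act (p * q) x = act p (act q x)" using pa x unfolding perm_action_def by blast
  show ?thesis
  proof (cases "a = b")
    case True then show ?thesis using pa x unfolding perm_action_def by simp
  next
    case False
    have "Perm.swap a b = Perm.swap a c * Perm.swap b c * Perm.swap a c"
      by (rule perm_eqI) (use c False in \<open>auto simp: apply_times transpose_def swap.rep_eq\<close>)
    then show ?thesis using swap_fresh[OF a] swap_fresh[OF b] c by (simp add: act_mult)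
  qed
qed

lemma supports_Int:
  assumes pa: "perm_action X act" and x: "x \<in> X" and fin: "finite S" "finite T"
    and sS: "supports act S x" and sT: "supports act T x"
  shows "supports act (S \<inter> T) x"
  unfolding supports_def
proof (intro allI impI)
  fix p :: "name perm"
  assume "\<forall>a\<in>S \<inter> T. Perm.apply p a = a"
  then show "act p x = x"
  proof (induction "card (affected p)" arbitrary: p rule: less_induct)
    case less
    show ?case
    proof (cases "p = 1")
      case True then show ?thesis using pa x unfolding perm_action_def by auto
    next
      case False
      then obtain a where a: "a \<in> affected p" by (metis affected_empty_iff all_not_in_conv)
      define b where "b = Perm.apply p a"
      have ab: "b \<noteq> a" using a by (simp add: in_affected b_def)
      have pb: "Perm.apply p b \<noteq> b" using ab unfolding b_def by (metis apply_inj)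
      define p' where "p' = Perm.swap a b * p"
      have p_eq: "p = Perm.swap a b * p'" unfolding p'_def by (simp flip: mult.assoc)
      have "affected p' \<subseteq> affected p - {a}"
      proof
        fix z assume z: "z \<in> affected p'"
        show "z \<in> affected p - {a}"
        proof (rule ccontr)
          assume "z \<notin> affected p - {a}"
          then consider "z = a" | "Perm.apply p z = z" by (auto simp: in_affected)
          then show False
          proof cases
            case 1 then show False using z by (simp add: p'_def in_affected apply_times b_def)
          next
            case 2
            then have "z \<noteq> a" "z \<noteq> b" using ab pb b_def by auto
            then show False using z 2 by (simp add: p'_def in_affected apply_times)
          qed
        qed
      qed
      then have "card (affected p') < card (affected p)"
        and "\<forall>z\<in>S \<inter> T. Perm.apply p' z = z"
        using a less.prems by (auto intro!: psubset_card_mono simp: in_affected)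
      then have "act p' x = x" by (rule less.hyps)
      moreover have "a \<notin> S \<inter> T" "b \<notin> S \<inter> T" using less.prems a pb by (auto simp: in_affected)
      ultimately show ?thesis
        using pa x swap_fixes_outside_Int_supports[OF pa x fin sS sT]
        unfolding p_eq perm_action_def by metis
    qed
  qed
qed

lemma supp_subset_support: "finite S \<Longrightarrow> supports act S x \<Longrightarrow> supp act x \<subseteq> S"
  unfolding supp_def by blast

text \<open>Since finite supports are closed under intersection, a finite support of least cardinality
  is contained in every other one; it is therefore the intersection \<open>supp\<close>.\<close>

lemma finite_supp_supports:
  assumes ns: "nominal_set X act" and x: "x \<in> X"
  shows "finite (supp act x) \<and> supports act (supp act x) x"
proof -
  have pa: "perm_action X act" using ns unfolding nominal_set_def by blast
  define P where "P S \<longleftrightarrow> finite S \<and> supports act S x" for S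
  have "\<exists>S. P S" using ns x unfolding nominal_set_def P_def by blast
  then obtain S0 where S0: "P S0" and least: "\<And>S. P S \<Longrightarrow> card S0 \<le> card S"
    by (metis ex_has_least_nat)
  have "S0 \<subseteq> S" if "P S" for S
  proof -
    have "P (S0 \<inter> S)" using supports_Int[OF pa x] S0 that unfolding P_def by auto
    then have "card S0 \<le> card (S0 \<inter> S)" by (rule least)
    then show ?thesis using S0 unfolding P_def by (metis card_seteq inf_le1 le_iff_inf)
  qed
  then have "supp act x = S0" using S0 unfolding supp_def P_def by blast
  then show ?thesis using S0 unfolding P_def by simp
qed

lemmas finite_supp = finite_supp_supports[THEN conjunct1]
lemmas supports_supp = finite_supp_supports[THEN conjunct2]

lemma supports_act_image:
  assumes pa: "perm_action X act" and x: "x \<in> X" and s: "supports act S x"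
  shows "supports act (Perm.apply p ` S) (act p x)"
  unfolding supports_def
proof (intro allI impI)
  fix q assume q: "\<forall>a\<in>Perm.apply p ` S. Perm.apply q a = a"
  define r where "r = inverse p * q * p"
  have "\<forall>a\<in>S. Perm.apply r a = a"
    using q by (simp add: r_def apply_times apply_inverse bij_is_inj)
  then have "act r x = x" using s unfolding supports_def by blast
  have act_mult: "\<And>p q. act (p * q) x = act p (act q x)" using pa x unfolding perm_action_def by blast
  have "act q (act p x) = act (p * r) x" unfolding r_def act_mult[symmetric] by (simp flip: mult.assoc)
  also have "\<dots> = act p x" using \<open>act r x = x\<close> by (simp add: act_mult)
  finally show "act q (act p x) = act p x" .
qed

lemma supp_act:
  assumes ns: "nominal_set X act" and x: "x \<in> X"
  shows "supp act (act p x) = Perm.apply p ` supp act x"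
proof -
  have pa: "perm_action X act" using ns unfolding nominal_set_def by blast
  have supp_act_subset: "supp act (act q y) \<subseteq> Perm.apply q ` supp act y" if y: "y \<in> X" for y q
    using finite_supp[OF ns y]
    by (intro supp_subset_support supports_act_image[OF pa y supports_supp[OF ns y]]) simp
  have px: "act p x \<in> X" using pa x unfolding perm_action_def by blast
  have "act (inverse p) (act p x) = x"
    using pa x unfolding perm_action_def by (metis perm.left_inverse)
  then have "supp act x \<subseteq> Perm.apply (inverse p) ` supp act (act p x)"
    using supp_act_subset[OF px, of "inverse p"] by simp
  then have "Perm.apply p ` supp act x \<subseteq> Perm.apply p ` Perm.apply (inverse p) ` supp act (act p x)"
    by (rule image_mono)
  also have "\<dots> = supp act (act p x)"
    by (simp add: image_image apply_inverse bij_is_surj surj_f_inv_f)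
  finally show ?thesis using supp_act_subset[OF x] by blast
qed

lemma supp_prod_act:
  assumes n1: "nominal_set X1 a1" and n2: "nominal_set X2 a2" and x: "x \<in> X1" and y: "y \<in> X2"
  shows "supp (prod_act a1 a2) (x, y) = supp a1 x \<union> supp a2 y"
proof (rule antisym)
  show "supp (prod_act a1 a2) (x, y) \<subseteq> supp a1 x \<union> supp a2 y"
  proof (rule supp_subset_support)
    show "finite (supp a1 x \<union> supp a2 y)" using finite_supp[OF n1 x] finite_supp[OF n2 y] by blast
    show "supports (prod_act a1 a2) (supp a1 x \<union> supp a2 y) (x, y)"
      using supports_supp[OF n1 x] supports_supp[OF n2 y] unfolding supports_def prod_act_def by auto
  qed
  show "supp a1 x \<union> supp a2 y \<subseteq> supp (prod_act a1 a2) (x, y)"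
    unfolding supp_def[of "prod_act a1 a2"]
  proof (rule Inter_greatest)
    fix S assume "S \<in> {S. finite S \<and> supports (prod_act a1 a2) S (x, y)}"
    then have S: "finite S" "supports (prod_act a1 a2) S (x, y)" by auto
    then have "supports a1 S x" "supports a2 S y" unfolding supports_def prod_act_def by auto
    then have "supp a1 x \<subseteq> S" "supp a2 y \<subseteq> S" by (simp_all add: supp_subset_support[OF S(1)])
    then show "supp a1 x \<union> supp a2 y \<subseteq> S" by (rule Un_least)
  qed
qed

lemma perm_fixing_avoiding:
  fixes A :: "name set"
  assumes "finite A" "finite B" "finite C" "A \<inter> C = {}"
  shows "\<exists>p. (\<forall>c\<in>C. Perm.apply p c = c) \<and> Perm.apply p ` A \<inter> B = {}"
  using assms(1,4)
proof (induction A rule: finite_induct)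
  case empty then show ?case by (intro exI[of _ 1]) simp
next
  case (insert a A)
  then obtain p' where p': "\<forall>c\<in>C. Perm.apply p' c = c" "Perm.apply p' ` A \<inter> B = {}" by auto
  obtain c where c: "c \<notin> insert a A \<union> B \<union> C \<union> affected p'"
    using ex_new_if_finite[OF infinite_UNIV_nat, of "insert a A \<union> B \<union> C \<union> affected p'"]
      insert assms(2,3) by auto
  define p where "p = p' * Perm.swap a c"
  have agree: "Perm.apply p z = Perm.apply p' z" if "z \<noteq> a" "z \<noteq> c" for z
    using that by (simp add: p_def apply_times)
  then have "\<forall>z\<in>C. Perm.apply p z = z"
    using p'(1) c insert.prems by (metis IntI Un_iff empty_iff insertI1)
  moreover have "Perm.apply p ` insert a A \<inter> B = {}"
  proof -
    have "Perm.apply p a = c" using c by (auto simp: p_def apply_times in_affected)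
    moreover have "Perm.apply p ` A = Perm.apply p' ` A"
      using insert.hyps(2) c by (intro image_cong[OF refl] agree) auto
    ultimately show ?thesis using p'(2) c by auto
  qed
  ultimately show ?case by blast
qed

lemma card_Un3_eq_iff:
  assumes "finite A" "finite B" "finite C"
  shows "card (A \<union> B \<union> C) = card A + card B + card C \<longleftrightarrow>
           A \<inter> B = {} \<and> A \<inter> C = {} \<and> B \<inter> C = {}"
proof -
  have "card (A \<union> B) + card (A \<inter> B) = card A + card B"
    and "card (A \<union> B \<union> C) + card ((A \<union> B) \<inter> C) = card (A \<union> B) + card C"
    using card_Un_Int assms by (metis finite_UnI)+
  then have "card (A \<union> B \<union> C) = card A + card B + card C \<longleftrightarrow>
      card (A \<inter> B) = 0 \<and> card ((A \<union> B) \<inter> C) = 0" by linarith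
  also have "\<dots> \<longleftrightarrow> A \<inter> B = {} \<and> A \<inter> C = {} \<and> B \<inter> C = {}" using assms by auto
  finally show ?thesis .
qed

lemma card_Un3_le: "card (A \<union> B \<union> C) \<le> card A + card B + card C"
  by (meson add_right_mono card_Un_le le_trans)

locale equivariant_map =
  fixes X :: "'a set" and act :: "name perm \<Rightarrow> 'a \<Rightarrow> 'a"
    and Y :: "'b set" and actY :: "name perm \<Rightarrow> 'b \<Rightarrow> 'b" and f :: "'a \<Rightarrow> 'b"
  assumes nominal_X: "nominal_set X act" and nominal_Y: "nominal_set Y actY"
    and equivariant: "equivariant X act Y actY f"
begin

lemma supp_image_subset:
  assumes v: "v \<in> X"
  shows "supp actY (f v) \<subseteq> supp act v"
proof (rule supp_subset_support)
  show "finite (supp act v)" using finite_supp[OF nominal_X v] .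
  show "supports actY (supp act v) (f v)" unfolding supports_def
  proof (intro allI impI)
    fix p assume "\<forall>a\<in>supp act v. Perm.apply p a = a"
    then have "act p v = v" using supports_supp[OF nominal_X v] unfolding supports_def by blast
    then show "actY p (f v) = f v" using equivariant v unfolding equivariant_def by metis
  qed
qed

lemma supp_eq_Un_bv: "v \<in> X \<Longrightarrow> supp act v = supp actY (f v) \<union> bv act actY f v"
  using supp_image_subset unfolding bv_def by blast

lemma bv_Int_supp_image: "bv act actY f v \<inter> supp actY (f v) = {}"
  unfolding bv_def by blast

lemma finite_bv: "v \<in> X \<Longrightarrow> finite (bv act actY f v)"
  using finite_supp[OF nominal_X] unfolding bv_def by blast

lemma card_supp_eq: "v \<in> X \<Longrightarrow> card (supp act v) = card (supp actY (f v)) + card (bv act actY f v)"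
proof -
  assume v: "v \<in> X"
  have "finite (supp act v)" by (rule finite_supp[OF nominal_X v])
  then show ?thesis
    using supp_image_subset[OF v] unfolding bv_def
    by (simp add: card_Diff_subset card_mono finite_subset)
qed

lemma f_safe_iff_card_bv:
  "f_safe X act f u \<longleftrightarrow> u \<in> X \<and> (\<forall>v\<in>X. f v = f u \<longrightarrow> card (bv act actY f v) \<le> card (bv act actY f u))"
  unfolding f_safe_def using card_supp_eq by (metis add_le_cancel_left)

text \<open>Renaming the bound names of \<open>v\<close> by a permutation fixing \<open>supp (f v)\<close> keeps it in its fibre.\<close>

lemma bv_rename_avoiding:
  assumes v: "v \<in> X" and A: "finite A"
  obtains w where "w \<in> X" "f w = f v" "card (bv act actY f w) = card (bv act actY f v)"
    "bv act actY f w \<inter> A = {}"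
proof -
  have fv: "f v \<in> Y" using equivariant v unfolding equivariant_def by blast
  obtain p where p: "\<forall>c\<in>supp actY (f v). Perm.apply p c = c"
    "Perm.apply p ` bv act actY f v \<inter> A = {}"
    using perm_fixing_avoiding[OF finite_bv[OF v] A finite_supp[OF nominal_Y fv]]
    unfolding bv_def by blast
  define w where "w = act p v"
  have w: "w \<in> X" using nominal_X v unfolding w_def nominal_set_def perm_action_def by blast
  have "f w = actY p (f v)" using equivariant v unfolding w_def equivariant_def by blast
  also have "\<dots> = f v" using supports_supp[OF nominal_Y fv] p(1) unfolding supports_def by blast
  finally have fw: "f w = f v" .
  have "bv act actY f w = Perm.apply p ` (supp act v) - supp actY (f v)"
    using fw unfolding bv_def w_def supp_act[OF nominal_X v] by simp
  also have "\<dots> = Perm.apply p ` bv act actY f v"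
    using p(1) supp_image_subset[OF v] unfolding bv_def by (auto simp: apply_inj)
  finally have bv_w: "bv act actY f w = Perm.apply p ` bv act actY f v" .
  have "card (bv act actY f w) = card (bv act actY f v)"
    unfolding bv_w by (rule card_image) (simp add: inj_on_def apply_inj)
  moreover have "bv act actY f w \<inter> A = {}" using bv_w p(2) by simp
  ultimately show thesis using that w fw by blast
qed

end

locale equivariant_map_pair =
  m1: equivariant_map X1 a1 Y1 b1 f1 + m2: equivariant_map X2 a2 Y2 b2 f2
  for X1 :: "'a set" and a1 and Y1 :: "'c set" and b1 and f1
    and X2 :: "'b set" and a2 and Y2 :: "'d set" and b2 and f2
begin

abbreviation bv1 where "bv1 \<equiv> bv a1 b1 f1"
abbreviation bv2 where "bv2 \<equiv> bv a2 b2 f2"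

definition supp_bound :: "'a \<Rightarrow> 'b \<Rightarrow> nat" where
  "supp_bound v1 v2 =
     card (supp b1 (f1 v1) \<union> supp b2 (f2 v2)) + card (bv1 v1) + card (bv2 v2)"

lemma supp_prod_act_eq:
  "v1 \<in> X1 \<Longrightarrow> v2 \<in> X2 \<Longrightarrow> supp (prod_act a1 a2) (v1, v2) =
     (supp b1 (f1 v1) \<union> supp b2 (f2 v2)) \<union> bv1 v1 \<union> bv2 v2"
  using supp_prod_act[OF m1.nominal_X m2.nominal_X] m1.supp_eq_Un_bv m2.supp_eq_Un_bv by auto

lemma card_supp_prod_act_le:
  "v1 \<in> X1 \<Longrightarrow> v2 \<in> X2 \<Longrightarrow> card (supp (prod_act a1 a2) (v1, v2)) \<le> supp_bound v1 v2"
  unfolding supp_prod_act_eq supp_bound_def by (rule card_Un3_le)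

lemma card_supp_prod_act_eq_iff_fresh:
  assumes v1: "v1 \<in> X1" and v2: "v2 \<in> X2"
  shows "card (supp (prod_act a1 a2) (v1, v2)) = supp_bound v1 v2 \<longleftrightarrow>
           fresh_set (bv1 v1) a2 v2 \<and> fresh_set (bv2 v2) a1 v1"
proof -
  let ?F = "supp b1 (f1 v1) \<union> supp b2 (f2 v2)"
  have "finite ?F"
    using finite_supp[OF m1.nominal_X v1] finite_supp[OF m2.nominal_X v2]
      m1.supp_image_subset[OF v1] m2.supp_image_subset[OF v2] by (meson finite_Un finite_subset)
  then have "card (supp (prod_act a1 a2) (v1, v2)) = supp_bound v1 v2 \<longleftrightarrow>
      ?F \<inter> bv1 v1 = {} \<and> ?F \<inter> bv2 v2 = {} \<and> bv1 v1 \<inter> bv2 v2 = {}"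
    unfolding supp_prod_act_eq[OF v1 v2] supp_bound_def
    by (rule card_Un3_eq_iff[OF _ m1.finite_bv[OF v1] m2.finite_bv[OF v2]])
  also have "\<dots> \<longleftrightarrow> fresh_set (bv1 v1) a2 v2 \<and> fresh_set (bv2 v2) a1 v1"
    unfolding fresh_set_def m1.supp_eq_Un_bv[OF v1] m2.supp_eq_Un_bv[OF v2]
    using m1.bv_Int_supp_image m2.bv_Int_supp_image by blast
  finally show ?thesis .
qed

text \<open>The bound is attained in the fibre of \<open>(v\<^sub>1, v\<^sub>2)\<close>: rename \<open>bv v\<^sub>2\<close> away from
  \<open>supp (f\<^sub>1 v\<^sub>1)\<close>, then \<open>bv v\<^sub>1\<close> away from everything in the new second component.\<close>

lemma supp_bound_attained:
  assumes v1: "v1 \<in> X1" and v2: "v2 \<in> X2"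
  obtains w1 w2 where "w1 \<in> X1" "w2 \<in> X2" "f1 w1 = f1 v1" "f2 w2 = f2 v2"
    "card (supp (prod_act a1 a2) (w1, w2)) = supp_bound v1 v2"
proof -
  have fin1: "finite (supp b1 (f1 v1))"
    using finite_supp[OF m1.nominal_X v1] m1.supp_image_subset[OF v1] finite_subset by blast
  obtain w2 where w2: "w2 \<in> X2" "f2 w2 = f2 v2" "card (bv2 w2) = card (bv2 v2)"
      "bv2 w2 \<inter> supp b1 (f1 v1) = {}"
    using m2.bv_rename_avoiding[OF v2 fin1] .
  obtain w1 where w1: "w1 \<in> X1" "f1 w1 = f1 v1" "card (bv1 w1) = card (bv1 v1)"
      "bv1 w1 \<inter> supp a2 w2 = {}"
    using m1.bv_rename_avoiding[OF v1 finite_supp[OF m2.nominal_X w2(1)]] .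
  have "fresh_set (bv1 w1) a2 w2 \<and> fresh_set (bv2 w2) a1 w1"
    using w1(4) w2(4) m1.supp_eq_Un_bv[OF w1(1)] m2.supp_eq_Un_bv[OF w2(1)] w1(2)
    unfolding fresh_set_def by auto
  then have "card (supp (prod_act a1 a2) (w1, w2)) = supp_bound w1 w2"
    using card_supp_prod_act_eq_iff_fresh[OF w1(1) w2(1)] by blast
  also have "\<dots> = supp_bound v1 v2" unfolding supp_bound_def using w1 w2 by simp
  finally show thesis using w1 w2 that by blast
qed

lemma f_safe_prod_iff_supp_bound:
  assumes u1: "u1 \<in> X1" and u2: "u2 \<in> X2"
  shows "f_safe (X1 \<times> X2) (prod_act a1 a2) (map_prod f1 f2) (u1, u2) \<longleftrightarrow>
     (\<forall>v1\<in>X1. \<forall>v2\<in>X2. f1 v1 = f1 u1 \<longrightarrow> f2 v2 = f2 u2 \<longrightarrow>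
        supp_bound v1 v2 \<le> card (supp (prod_act a1 a2) (u1, u2)))"
proof -
  have "f_safe (X1 \<times> X2) (prod_act a1 a2) (map_prod f1 f2) (u1, u2) \<longleftrightarrow>
     (\<forall>v1\<in>X1. \<forall>v2\<in>X2. f1 v1 = f1 u1 \<longrightarrow> f2 v2 = f2 u2 \<longrightarrow>
        card (supp (prod_act a1 a2) (v1, v2)) \<le> card (supp (prod_act a1 a2) (u1, u2)))"
    unfolding f_safe_def using u1 u2 by auto
  also have "\<dots> \<longleftrightarrow> (\<forall>v1\<in>X1. \<forall>v2\<in>X2. f1 v1 = f1 u1 \<longrightarrow> f2 v2 = f2 u2 \<longrightarrow>
        supp_bound v1 v2 \<le> card (supp (prod_act a1 a2) (u1, u2)))" (is "?card_le \<longleftrightarrow> ?bound_le")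
  proof
    assume ?card_le
    show ?bound_le
    proof (intro ballI impI)
      fix v1 v2 assume v: "v1 \<in> X1" "v2 \<in> X2" "f1 v1 = f1 u1" "f2 v2 = f2 u2"
      obtain w1 w2 where "w1 \<in> X1" "w2 \<in> X2" "f1 w1 = f1 v1" "f2 w2 = f2 v2"
          "card (supp (prod_act a1 a2) (w1, w2)) = supp_bound v1 v2"
        using supp_bound_attained[OF v(1,2)] .
      with \<open>?card_le\<close> v show "supp_bound v1 v2 \<le> card (supp (prod_act a1 a2) (u1, u2))"
        by metis
    qed
  next
    assume ?bound_le
    then show ?card_le using card_supp_prod_act_le le_trans by blast
  qed
  finally show ?thesis .
qed

lemma f_safe_prod_iff_supp_bound_max:
  assumes u1: "u1 \<in> X1" and u2: "u2 \<in> X2"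
  shows "f_safe (X1 \<times> X2) (prod_act a1 a2) (map_prod f1 f2) (u1, u2) \<longleftrightarrow>
     (\<forall>v1\<in>X1. \<forall>v2\<in>X2. f1 v1 = f1 u1 \<longrightarrow> f2 v2 = f2 u2 \<longrightarrow>
        supp_bound v1 v2 \<le> supp_bound u1 u2) \<and>
     card (supp (prod_act a1 a2) (u1, u2)) = supp_bound u1 u2"
  unfolding f_safe_prod_iff_supp_bound[OF u1 u2]
proof
  let ?c = "card (supp (prod_act a1 a2) (u1, u2))"
  assume le_card: "\<forall>v1\<in>X1. \<forall>v2\<in>X2. f1 v1 = f1 u1 \<longrightarrow> f2 v2 = f2 u2 \<longrightarrow> supp_bound v1 v2 \<le> ?c"
  have "?c = supp_bound u1 u2"
    using le_card card_supp_prod_act_le[OF u1 u2] u1 u2 by (simp add: le_antisym)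
  with le_card show "(\<forall>v1\<in>X1. \<forall>v2\<in>X2. f1 v1 = f1 u1 \<longrightarrow> f2 v2 = f2 u2 \<longrightarrow>
      supp_bound v1 v2 \<le> supp_bound u1 u2) \<and> ?c = supp_bound u1 u2" by simp
qed auto

lemma supp_bound_max_iff_f_safe:
  assumes u1: "u1 \<in> X1" and u2: "u2 \<in> X2"
  shows "(\<forall>v1\<in>X1. \<forall>v2\<in>X2. f1 v1 = f1 u1 \<longrightarrow> f2 v2 = f2 u2 \<longrightarrow>
      supp_bound v1 v2 \<le> supp_bound u1 u2) \<longleftrightarrow> f_safe X1 a1 f1 u1 \<and> f_safe X2 a2 f2 u2"
  unfolding m1.f_safe_iff_card_bv m2.f_safe_iff_card_bv supp_bound_def using u1 u2 by fastforce

end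

theorem lemma5p28:
  fixes X1 :: "'a set" and X2 :: "'b set" and Y1 :: "'c set" and Y2 :: "'d set"
    and a1 b1 a2 b2 f1 f2 u1 u2
  assumes "nominal_set X1 a1" "nominal_set Y1 b1" "nominal_set X2 a2" "nominal_set Y2 b2"
    and "equivariant X1 a1 Y1 b1 f1" "equivariant X2 a2 Y2 b2 f2"
    and "safe_map X1 a1 Y1 f1" "safe_map X2 a2 Y2 f2"
    and "u1 \<in> X1" "u2 \<in> X2"
  shows "f_safe (X1 \<times> X2) (prod_act a1 a2) (map_prod f1 f2) (u1, u2) \<longleftrightarrow>
           f_safe X1 a1 f1 u1 \<and> f_safe X2 a2 f2 u2 \<and>
           fresh_set (bv a1 b1 f1 u1) a2 u2 \<and> fresh_set (bv a2 b2 f2 u2) a1 u1"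
proof -
  interpret equivariant_map_pair X1 a1 Y1 b1 f1 X2 a2 Y2 b2 f2
    using assms(1-6) by unfold_locales
  show ?thesis
    unfolding f_safe_prod_iff_supp_bound_max[OF assms(9,10)] supp_bound_max_iff_f_safe[OF assms(9,10)]
      card_supp_prod_act_eq_iff_fresh[OF assms(9,10)]
    by (rule conj_assoc)
qed

end
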